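(* Let $\mathbb F\subseteq\mathbb D$ be finite and $n:=\mathrm{lh}(\mathbb F)$. Then there exist $m\in\mathbb N$ and a finite sequence $\mathbb F=:\mathbb F_0,\mathbb F_1,\dots,\mathbb F_N$ with $\mathbb F_l=\Phi_{h_l}^{(i_l)}(\mathbb F_{l-1})$ for some $\mathbb F_{l-1}$-admissible index $(h_l,i_l)\in\mathbb F_{l-1}$ ($l=1,\dots,N$), such that $\mathbb F_N\subseteq\mathbb D_{m+1}^{m+n}$.
   Context: Dyadic intervals: $\Delta_k^{(j)}:=[\frac{j-1}{2^k},\frac{j}{2^k})$ for $k\ge0$. Dyadic tree $\mathbb D:=\{(k,j):k\ge1;\ j=1,\dots,2^{k-1}\}$; $\mathbb D_m^n:=\{(k,j):k=m,\dots,n;\ j=1,\dots,2^{k-1}\}$. Branches: $\mathbb B(t):=\{(k,j)\in\mathbb D:t\in\Delta_{k-1}^{(j)}\}$; local height $\mathrm{lh}(\mathbb F):=\max_{t\in[0,1)}|\mathbb F\cap\mathbb B(t)|$. An index $(h,i)\in\mathbb F$ is $\mathbb F$-admissible if neither $(h+1,2i-1)$ nor $(h+1,2i)$ belongs to $\mathbb F$. Fork: $\mathbb F_h^{(i)}:=\{(h,i),(h+1,2i-1),(h+1,2i)\}$. For $(k,j)\in\mathbb D$ define $j^\ast$: $j^\ast=j+2^{k-h-2}$ if $\Delta_{k-1}^{(j)}\subseteq\Delta_{h+1}^{(4i-2)}$; $j^\ast=j-2^{k-h-2}$ if $\Delta_{k-1}^{(j)}\subseteq\Delta_{h+1}^{(4i-1)}$;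 $j^\ast=j$ otherwise. Then $\Phi_h^{(i)}(\mathbb F):=\{(h+1,2i-1),(h+1,2i)\}\cup\{(k,j^\ast):(k,j)\in\mathbb F\setminus\mathbb F_h^{(i)}\}$. *)

theory Defs
  imports Complex_Main
begin

definition dyad :: "nat \<Rightarrow> nat \<Rightarrow> real set" where
  "dyad k j = {x. (real j - 1) / 2 ^ k \<le> x \<and> x < real j / 2 ^ k}"

definition dtree :: "(nat \<times> nat) set" where
  "dtree = {(k, j). 1 \<le> k \<and> 1 \<le> j \<and> j \<le> 2 ^ (k - 1)}"

definition dtree_lv :: "nat \<Rightarrow> nat \<Rightarrow> (nat \<times> nat) set" where
  "dtree_lv m n = {(k, j). m \<le> k \<and> k \<le> n \<and> 1 \<le> k \<and> 1 \<le> j \<and> j \<le> 2 ^ (k - 1)}"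

definition branch :: "real \<Rightarrow> (nat \<times> nat) set" where
  "branch t = {(k, j) \<in> dtree. t \<in> dyad (k - 1) j}"

definition lh :: "(nat \<times> nat) set \<Rightarrow> nat" where
  "lh F = Max {card (F \<inter> branch t) | t. 0 \<le> t \<and> t < 1}"

definition admissible :: "(nat \<times> nat) set \<Rightarrow> nat \<Rightarrow> nat \<Rightarrow> bool" where
  "admissible F h i \<longleftrightarrow> (h, i) \<in> F \<and> (h + 1, 2 * i - 1) \<notin> F \<and> (h + 1, 2 * i) \<notin> F"

definition fork :: "nat \<Rightarrow> nat \<Rightarrow> (nat \<times> nat) set" where
  "fork h i = {(h, i), (h + 1, 2 * i - 1), (h + 1, 2 * i)}"

definition jstar :: "nat \<Rightarrow> nat \<Rightarrow> nat \<Rightarrow> nat \<Rightarrow> nat" where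
  "jstar h i k j =
    (if dyad (k - 1) j \<subseteq> dyad (h + 1) (4 * i - 2) then j + 2 ^ (k - h - 2)
     else if dyad (k - 1) j \<subseteq> dyad (h + 1) (4 * i - 1) then j - 2 ^ (k - h - 2)
     else j)"

definition Phi :: "nat \<Rightarrow> nat \<Rightarrow> (nat \<times> nat) set \<Rightarrow> (nat \<times> nat) set" where
  "Phi h i F = {(h + 1, 2 * i - 1), (h + 1, 2 * i)}
      \<union> {(k, jstar h i k j) | k j. (k, j) \<in> F - fork h i}"

end

theory Submission
  imports Defs
begin

(* Give a family G of nodes on levels at most M the potential, the sum of 3^(M - k) over its
   nodes (k, j). Phi at an admissible (h, i) with h < M trades (h, i) for its two children, of
   total weight 2 * 3^(M - h - 1) < 3^(M - h), and keeps every other node on its level, so the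
   potential drops. The re-indexing j |-> j* exchanges the subtrees below the second and third
   grandchildren of (h, i); this preserves ancestry except through the two children, and a
   child lies on a branch only where (h, i) did, so Phi does not increase the number of nodes
   of G on any branch. While some node of G lies n = lh F or more levels above M, walking down
   from it along a path fully occupied by G reaches an admissible node within n levels, so Phi
   applies again; when this stops, all nodes lie on the levels M - n + 1, ..., M. *)

lemma scaled_bounds_iff_div:
  fixes u v a b :: nat
  shows "v * 2^a \<le> u * 2^b \<and> (u + 1) * 2^b \<le> (v + 1) * 2^a \<longleftrightarrow>
    b \<le> a \<and> u div 2^(a - b) = v"
proof (cases "b \<le> a")
  case True
  define p :: nat where "p = 2^(a - b)"
  have "(2::nat)^a = p * 2^b"
    using True by (simp add: p_def flip: power_add)
  then have "v * 2^a \<le> u * 2^b \<and> (u + 1) * 2^b \<le> (v + 1) * 2^a \<longleftrightarrow>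
      v * p \<le> u \<and> u < (v + 1) * p"
    by (simp only: mult.assoc [symmetric] mult_le_cancel2) auto
  also have "\<dots> \<longleftrightarrow> v \<le> u div p \<and> u div p < v + 1"
    by (simp add: p_def less_eq_div_iff_mult_less_eq div_less_iff_less_mult)
  also have "\<dots> \<longleftrightarrow> u div p = v"
    by linarith
  finally show ?thesis
    using True p_def by simp
next
  case False
  define p :: nat where "p = 2^(b - a)"
  have "2 \<le> p"
    using False by (simp add: p_def self_le_power)
  have "(2::nat)^b = p * 2^a"
    using False by (simp add: p_def flip: power_add)
  then have "v * 2^a \<le> u * 2^b \<and> (u + 1) * 2^b \<le> (v + 1) * 2^a \<longleftrightarrow>
      v \<le> u * p \<and> u * p + p \<le> v + 1"
    by (simp only: mult.assoc [symmetric] mult_le_cancel2) (simp add: algebra_simps)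
  with \<open>2 \<le> p\<close> False show ?thesis
    by linarith
qed

lemma dyad_eq_atLeastLessThan: "dyad k j = {(real j - 1) / 2^k..<real j / 2^k}"
  by (auto simp: dyad_def)

lemma dyad_subset_iff:
  assumes "1 \<le> j" and "1 \<le> j'"
  shows "dyad a j \<subseteq> dyad b j' \<longleftrightarrow> b \<le> a \<and> (j - 1) div 2^(a - b) = j' - 1"
proof -
  obtain u v where u: "j = u + 1" and v: "j' = v + 1"
    using assms by (metis add.commute le_Suc_ex)
  have "dyad a j \<subseteq> dyad b j' \<longleftrightarrow>
      real v / 2^b \<le> real u / 2^a \<and> real (u + 1) / 2^a \<le> real (v + 1) / 2^b"
    using divide_strict_right_mono [of "real u" "real (u + 1)" "2^a"]
    unfolding dyad_eq_atLeastLessThan u v by auto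
  also have "\<dots> \<longleftrightarrow>
      real (v * 2^a) \<le> real (u * 2^b) \<and> real ((u + 1) * 2^b) \<le> real ((v + 1) * 2^a)"
    by (simp add: field_simps)
  also have "\<dots> \<longleftrightarrow> b \<le> a \<and> u div 2^(a - b) = v"
    unfolding of_nat_le_iff by (rule scaled_bounds_iff_div)
  finally show ?thesis
    using u v by simp
qed

definition ancestor :: "nat \<times> nat \<Rightarrow> nat \<times> nat \<Rightarrow> bool" where
  "ancestor z w \<longleftrightarrow> fst z \<le> fst w \<and> (snd w - 1) div 2^(fst w - fst z) = snd z - 1"

lemma ancestor_iff_dyad_subset:
  assumes "(k, j) \<in> dtree" and "(K, J) \<in> dtree"
  shows "ancestor (k, j) (K, J) \<longleftrightarrow> dyad (K - 1) J \<subseteq> dyad (k - 1) j"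
  using assms by (auto simp: ancestor_def dyad_subset_iff dtree_def)

lemma ancestor_refl: "ancestor z z"
  by (simp add: ancestor_def)

lemma ancestor_trans:
  assumes "ancestor x y" and "ancestor y z"
  shows "ancestor x z"
proof -
  have "(2::nat)^(fst z - fst x) = 2^(fst z - fst y) * 2^(fst y - fst x)"
    using assms by (simp add: ancestor_def flip: power_add)
  with assms show ?thesis
    by (simp add: ancestor_def div_mult2_eq)
qed

lemma ancestor_level_le: "ancestor z w \<Longrightarrow> fst z \<le> fst w"
  by (simp add: ancestor_def)

lemma ancestor_same_level_eq:
  "ancestor (k, j) w \<Longrightarrow> ancestor (k, j') w \<Longrightarrow> 1 \<le> j \<Longrightarrow> 1 \<le> j' \<Longrightarrow> j = j'"
  by (simp add: ancestor_def)

lemma ancestor_children: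
  assumes "1 \<le> i"
  shows "ancestor (h, i) (h + 1, 2 * i - 1)" and "ancestor (h, i) (h + 1, 2 * i)"
  using assms by (simp_all add: ancestor_def)

lemma children_in_dtree:
  assumes "(h, i) \<in> dtree"
  shows "(h + 1, 2 * i - 1) \<in> dtree" and "(h + 1, 2 * i) \<in> dtree"
  using assms by (cases h; auto simp: dtree_def)+

text \<open>For a position \<open>u\<close> on some level (counted from 0), \<open>u div 2^e\<close> is the position of its
  ancestor \<open>e\<close> levels up; \<open>map_prefix f e\<close> moves the whole subtree below that ancestor
  as \<open>f\<close> moves the ancestor.\<close>

definition map_prefix :: "(nat \<Rightarrow> nat) \<Rightarrow> nat \<Rightarrow> nat \<Rightarrow> nat" where
  "map_prefix f e u = f (u div 2^e) * 2^e + u mod 2^e"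

lemma map_prefix_div [simp]: "map_prefix f e u div 2^e = f (u div 2^e)"
  by (simp add: map_prefix_def)

lemma map_prefix_id [simp]: "map_prefix id e u = u"
  unfolding map_prefix_def id_def by (rule div_mult_mod_eq)

lemma map_prefix_map_prefix: "map_prefix f e (map_prefix g e u) = map_prefix (f \<circ> g) e u"
  by (simp add: map_prefix_def)

lemma map_prefix_less:
  assumes "f (u div 2^e) < b"
  shows "map_prefix f e u < b * 2^e"
proof -
  have "map_prefix f e u < f (u div 2^e) * 2^e + 2^e"
    by (simp add: map_prefix_def)
  also have "\<dots> \<le> b * 2^e"
    using assms by (metis Suc_leI add.commute mult_Suc mult_le_mono1)
  finally show ?thesis .
qed

lemma map_prefix_div_power: "map_prefix f (d + e) u div 2^d = map_prefix f e (u div 2^d)"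
proof -
  have low: "u mod 2^(d + e) div 2^d = u div 2^d mod 2^e"
    by (simp add: power_add mod_mult2_eq)
  have high: "u div 2^(d + e) = u div 2^d div 2^e"
    by (simp add: power_add div_mult2_eq)
  have "map_prefix f (d + e) u = u mod 2^(d + e) + f (u div 2^(d + e)) * 2^e * 2^d"
    by (simp add: map_prefix_def power_add ac_simps)
  then show ?thesis
    unfolding high by (simp add: low) (simp add: map_prefix_def)
qed

text \<open>The 0-based form of \<open>jstar\<close> (lemma \<open>jstar_eq_jswap\<close>): the second and third
  grandchildren of \<open>(h, i)\<close> have positions \<open>4 * i - 3\<close> and \<open>4 * i - 2\<close> on level \<open>h + 2\<close>.\<close>

definition jswap :: "nat \<Rightarrow> nat \<Rightarrow> nat \<Rightarrow> nat \<Rightarrow> nat" where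
  "jswap h i k u =
    (if h + 2 \<le> k
     then map_prefix (id(4 * i - 3 := 4 * i - 2, 4 * i - 2 := 4 * i - 3)) (k - h - 2) u
     else u)"

lemma jstar_eq_jswap:
  assumes "1 \<le> i" and "1 \<le> j"
  shows "jstar h i k j = jswap h i k (j - 1) + 1"
proof -
  define e where "e = k - h - 2"
  define q where "q = (j - 1) div 2^e"
  define r where "r = (j - 1) mod 2^e"
  let ?\<tau> = "id(4 * i - 3 := 4 * i - 2, 4 * i - 2 := 4 * i - 3)"
  have second: "dyad (k - 1) j \<subseteq> dyad (h + 1) (4 * i - 2) \<longleftrightarrow> h + 2 \<le> k \<and> q = 4 * i - 3"
    using assms by (auto simp: dyad_subset_iff q_def e_def)
  have third: "dyad (k - 1) j \<subseteq> dyad (h + 1) (4 * i - 1) \<longleftrightarrow> h + 2 \<le> k \<and> q = 4 * i - 2"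
    using assms by (auto simp: dyad_subset_iff q_def e_def)
  have j: "j = q * 2^e + r + 1"
    using assms div_mult_mod_eq [of "j - 1" "2^e"] unfolding q_def r_def by linarith
  have swapped: "map_prefix ?\<tau> e (j - 1) = ?\<tau> q * 2^e + r"
    by (simp add: map_prefix_def q_def r_def)
  have jstar_cases: "jstar h i k j =
      (if h + 2 \<le> k \<and> q = 4 * i - 3 then j + 2^e
       else if h + 2 \<le> k \<and> q = 4 * i - 2 then j - 2^e else j)"
    unfolding jstar_def second third e_def ..
  have jswap_cases: "jswap h i k (j - 1) = (if h + 2 \<le> k then ?\<tau> q * 2^e + r else j - 1)"
    unfolding jswap_def e_def [symmetric] swapped ..
  consider "4 * i - 3 = q" | "4 * i - 2 = q" | "q \<noteq> 4 * i - 3" "q \<noteq> 4 * i - 2"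
    by force
  then show ?thesis
  proof cases
    case 1
    with assms have "4 * i - 2 = q + 1"
      by linarith
    with 1 have "?\<tau> q = q + 1"
      by simp
    with 1 assms show ?thesis
      unfolding jstar_cases jswap_cases by (subst (1 2) j) simp
  next
    case 2
    with assms have "?\<tau> q + 1 = q"
      by simp
    then have "?\<tau> q * 2^e + 2^e = q * 2^e"
      by (metis add_mult_distrib mult_1)
    with 2 assms show ?thesis
      unfolding jstar_cases jswap_cases by (subst (1 2) j) auto
  next
    case 3
    with assms show ?thesis
      unfolding jstar_cases jswap_cases by (subst (1 2) j) simp
  qed
qed

lemma jswap_jswap [simp]: "jswap h i k (jswap h i k u) = u"
proof -
  have "id(a := b, b := a) \<circ> id(a := b, b := a) = id" for a b :: nat
    by (auto simp: fun_eq_iff)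
  then show ?thesis
    by (simp add: jswap_def map_prefix_map_prefix)
qed

lemma jswap_less:
  assumes "(h, i) \<in> dtree" and "u < 2^(k - 1)"
  shows "jswap h i k u < 2^(k - 1)"
proof (cases "h + 2 \<le> k")
  case True
  let ?\<tau> = "id(4 * i - 3 := 4 * i - 2, 4 * i - 2 := 4 * i - 3)"
  define e where "e = k - h - 2"
  have "k - 1 = (h + 1) + e"
    using True by (simp add: e_def)
  then have k: "(2::nat)^(k - 1) = 2^(h + 1) * 2^e"
    by (simp only: power_add)
  have "4 * i \<le> 2^(h + 1)"
    using assms(1) by (cases h) (auto simp: dtree_def)
  moreover have "u div 2^e < 2^(h + 1)"
    using assms(2) unfolding k by (simp add: div_less_iff_less_mult)
  ultimately have "?\<tau> (u div 2^e) < 2^(h + 1)"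
    using assms(1) by (auto simp: dtree_def)
  then have "map_prefix ?\<tau> e u < 2^(k - 1)"
    unfolding k by (rule map_prefix_less)
  with True show ?thesis
    by (simp add: jswap_def e_def)
next
  case False
  with assms show ?thesis
    by (simp add: jswap_def)
qed

lemma div_jswap:
  assumes "k \<le> K" and "1 \<le> i"
    and not_child: "k = h + 1 \<Longrightarrow> U div 2^(K - k) \<notin> {2 * i - 2, 2 * i - 1}"
  shows "jswap h i K U div 2^(K - k) = jswap h i k (U div 2^(K - k))"
proof (cases "h + 2 \<le> k")
  case True
  with \<open>k \<le> K\<close> obtain d e where "k = h + 2 + e" and "K = k + d"
    using le_Suc_ex by blast
  then show ?thesis
    using map_prefix_div_power [of _ d e U] by (simp add: jswap_def ac_simps)
next
  case False
  show ?thesis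
  proof (cases "h + 2 \<le> K")
    case True
    let ?\<tau> = "id(4 * i - 3 := 4 * i - 2, 4 * i - 2 := 4 * i - 3)"
    obtain s E where hk: "h + 2 = k + s" and hK: "K = h + 2 + E"
      using False True le_Suc_ex nat_le_linear by metis
    define q where "q = U div 2^E"
    have shift: "x div 2^(K - k) = x div 2^E div 2^s" for x :: nat
    proof -
      have "K - k = E + s"
        using hk hK by simp
      then show ?thesis
        by (simp add: power_add div_mult2_eq)
    qed
    \<comment> \<open>The exchanged positions have a common ancestor two levels up, but their parents
      are the two children of \<open>(h, i)\<close>.\<close>
    have "?\<tau> q div 2^s = q div 2^s"
    proof (cases "q \<in> {4 * i - 3, 4 * i - 2}")
      case True
      with \<open>1 \<le> i\<close> have "q div 2 \<in> {2 * i - 2, 2 * i - 1}"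
        by auto
      with not_child False hk have "2 \<le> s"
        by (cases "s = 1") (auto simp: shift q_def)
      then have "(2::nat)^s = 4 * 2^(s - 2)"
        by (auto simp: le_iff_add power_add)
      moreover have "?\<tau> q div 4 = q div 4"
      proof -
        obtain m where "i = m + 1"
          using \<open>1 \<le> i\<close> by (metis add.commute le_Suc_ex)
        then have "(4 * i - 3) div 4 = m" and "(4 * i - 2) div 4 = m"
          by (auto intro!: div_nat_eqI)
        with True show ?thesis
          by auto
      qed
      ultimately show ?thesis
        by (simp add: div_mult2_eq)
    qed simp
    moreover have "jswap h i K U = map_prefix ?\<tau> E U"
      by (simp add: jswap_def hK)
    ultimately show ?thesis
      using False by (simp add: jswap_def shift q_def)
  qed (use False in \<open>simp add: jswap_def\<close>)
qed

definition swap_node :: "nat \<Rightarrow> nat \<Rightarrow> nat \<times> nat \<Rightarrow> nat \<times> nat" where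
  "swap_node h i z = (fst z, jstar h i (fst z) (snd z))"

lemma Phi_eq_image:
  "Phi h i G = {(h + 1, 2 * i - 1), (h + 1, 2 * i)} \<union> swap_node h i ` (G - fork h i)"
  unfolding Phi_def swap_node_def by force

lemma fst_swap_node [simp]: "fst (swap_node h i z) = fst z"
  by (simp add: swap_node_def)

lemma swap_node_eq_jswap:
  "1 \<le> i \<Longrightarrow> 1 \<le> snd z \<Longrightarrow> swap_node h i z = (fst z, jswap h i (fst z) (snd z - 1) + 1)"
  by (simp add: swap_node_def jstar_eq_jswap)

lemma swap_node_fixed:
  "1 \<le> i \<Longrightarrow> 1 \<le> snd z \<Longrightarrow> fst z < h + 2 \<Longrightarrow> swap_node h i z = z"
  by (simp add: swap_node_eq_jswap jswap_def)

lemma swap_node_swap_node: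
  "1 \<le> i \<Longrightarrow> 1 \<le> snd z \<Longrightarrow> swap_node h i (swap_node h i z) = z"
  by (simp add: swap_node_eq_jswap)

lemma swap_node_in_dtree:
  assumes "(h, i) \<in> dtree" and "z \<in> dtree"
  shows "swap_node h i z \<in> dtree"
proof -
  have "snd z - 1 < 2^(fst z - 1)"
    using assms(2) by (auto simp: dtree_def)
  then have "jswap h i (fst z) (snd z - 1) < 2^(fst z - 1)"
    by (rule jswap_less [OF assms(1)])
  with assms show ?thesis
    by (auto simp: swap_node_eq_jswap dtree_def)
qed

lemma ancestor_swap_node:
  assumes "1 \<le> i" and "1 \<le> snd z" and "1 \<le> snd w" and "ancestor z w"
    and "z \<noteq> (h + 1, 2 * i - 1)" and "z \<noteq> (h + 1, 2 * i)"
  shows "ancestor (swap_node h i z) (swap_node h i w)"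
proof -
  obtain k j K J where z: "z = (k, j)" and w: "w = (K, J)"
    by fastforce
  have "k \<le> K" and up: "(J - 1) div 2^(K - k) = j - 1"
    using assms(4) by (simp_all add: ancestor_def z w)
  moreover have "k = h + 1 \<Longrightarrow> j - 1 \<notin> {2 * i - 2, 2 * i - 1}"
    using assms(1,2,5,6) by (auto simp: z)
  ultimately show ?thesis
    using assms(1-3) div_jswap [of k K i h "J - 1", unfolded up]
    by (simp add: ancestor_def swap_node_eq_jswap z w)
qed

lemma ancestor_of_swap_node:
  assumes "(h, i) \<in> dtree" and "z \<in> dtree" and "w \<in> dtree"
    and "z \<notin> {(h + 1, 2 * i - 1), (h + 1, 2 * i)}" and "ancestor (swap_node h i z) w"
  shows "ancestor z (swap_node h i w)"
proof -
  have "1 \<le> i" "1 \<le> snd z" "1 \<le> snd w"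
    using assms(1-3) by (auto simp: dtree_def)
  moreover have "swap_node h i z \<notin> {(h + 1, 2 * i - 1), (h + 1, 2 * i)}"
    using assms(4) swap_node_fixed [of i z h] \<open>1 \<le> i\<close> \<open>1 \<le> snd z\<close>
    by (cases "fst z = h + 1") (auto dest!: arg_cong [where f = fst])
  ultimately have "ancestor (swap_node h i (swap_node h i z)) (swap_node h i w)"
    using ancestor_swap_node [OF _ _ _ assms(5)] swap_node_in_dtree [OF assms(1,2)]
    by (auto simp: dtree_def)
  with \<open>1 \<le> i\<close> \<open>1 \<le> snd z\<close> show ?thesis
    by (simp add: swap_node_swap_node)
qed

text \<open>The combinatorial form of \<open>lh G \<le> n\<close>.\<close>

definition ancestors_bounded :: "nat \<Rightarrow> (nat \<times> nat) set \<Rightarrow> bool" where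
  "ancestors_bounded n G \<longleftrightarrow> (\<forall>w \<in> dtree. card {z \<in> G. ancestor z w} \<le> n)"

lemma ancestors_bounded_lh:
  assumes "F \<subseteq> dtree" and "finite F"
  shows "ancestors_bounded (lh F) F"
  unfolding ancestors_bounded_def
proof clarify
  fix K J
  assume w: "(K, J) \<in> dtree"
  define t :: real where "t = (real J - 1) / 2^(K - 1)"
  have t: "t \<in> dyad (K - 1) J"
    by (simp add: dyad_def t_def divide_strict_right_mono)
  have "J \<le> 2^(K - 1)"
    using w by (simp add: dtree_def)
  then have "real J \<le> 2^(K - 1)"
    using of_nat_le_iff [of J "2^(K - 1)"] by simp
  then have "t < 1"
    unfolding t_def by (simp only: divide_less_eq_1_pos zero_less_power zero_less_numeral)
  moreover have "0 \<le> t"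
    using w by (simp add: t_def dtree_def)
  moreover have "{z \<in> F. ancestor z (K, J)} \<subseteq> F \<inter> branch t"
  proof clarify
    fix k j
    assume "(k, j) \<in> F" and "ancestor (k, j) (K, J)"
    have "(k, j) \<in> dtree"
      using \<open>(k, j) \<in> F\<close> assms(1) by blast
    with \<open>ancestor (k, j) (K, J)\<close> have "dyad (K - 1) J \<subseteq> dyad (k - 1) j"
      using ancestor_iff_dyad_subset [OF _ w] by blast
    with t \<open>(k, j) \<in> F\<close> \<open>(k, j) \<in> dtree\<close> show "(k, j) \<in> branch t"
      by (auto simp: branch_def)
  qed
  moreover have "finite {card (F \<inter> branch t) | t. 0 \<le> t \<and> t < 1}"
    using assms(2) by (auto intro: finite_subset [of _ "{..card F}"] card_mono)
  ultimately show "card {z \<in> F. ancestor z (K, J)} \<le> lh F"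
    unfolding lh_def using assms(2) by (blast intro: Max_ge order.trans card_mono)
qed

definition potential :: "nat \<Rightarrow> (nat \<times> nat) set \<Rightarrow> nat" where
  "potential M G = (\<Sum>z \<in> G. 3^(M - fst z))"

lemma Phi_subset_dtree:
  "(h, i) \<in> dtree \<Longrightarrow> G \<subseteq> dtree \<Longrightarrow> Phi h i G \<subseteq> dtree"
  using children_in_dtree swap_node_in_dtree by (auto simp: Phi_eq_image)

lemma potential_Phi_less:
  assumes "finite G" and "admissible G h i" and "h < M"
  shows "potential M (Phi h i G) < potential M G"
proof -
  let ?g = "\<lambda>z :: nat \<times> nat. (3::nat)^(M - fst z)"
  have rest: "G - fork h i = G - {(h, i)}" and "(h, i) \<in> G"
    using assms(2) by (auto simp: admissible_def fork_def)
  have "3^(M - h) = 3 * (3::nat)^(M - h - 1)"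
    using assms(3) by (simp flip: power_Suc)
  have "potential M (Phi h i G)
      \<le> sum ?g {(h + 1, 2 * i - 1), (h + 1, 2 * i)} + sum ?g (swap_node h i ` (G - fork h i))"
    unfolding potential_def Phi_eq_image using assms(1) by (subst sum_Un_nat) auto
  also have "\<dots> \<le> 2 * 3^(M - h - 1) + sum (?g \<circ> swap_node h i) (G - fork h i)"
    using assms(1) by (intro add_mono sum_image_le) (auto simp: sum.insert_if)
  also have "\<dots> < 3^(M - h) + sum ?g (G - {(h, i)})"
    using \<open>3^(M - h) = 3 * 3^(M - h - 1)\<close> by (simp add: rest comp_def)
  also have "\<dots> = potential M G"
    using assms(1) \<open>(h, i) \<in> G\<close> by (simp add: potential_def sum.remove)
  finally show ?thesis .
qed

lemma ancestors_bounded_Phi: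
  assumes "G \<subseteq> dtree" and "finite G" and "admissible G h i" and "ancestors_bounded n G"
  shows "ancestors_bounded n (Phi h i G)"
  unfolding ancestors_bounded_def
proof
  \<comment> \<open>The ancestors of \<open>w\<close> in \<open>Phi h i G\<close> other than the children come from ancestors of
    \<open>swap_node h i w\<close> in \<open>G\<close> other than \<open>(h, i)\<close>; a child is an ancestor only if \<open>(h, i)\<close> is.\<close>
  fix w
  assume w: "w \<in> dtree"
  let ?sw = "swap_node h i"
  let ?A = "{z \<in> G. ancestor z (?sw w)}"
  define C where "C = {c \<in> {(h + 1, 2 * i - 1), (h + 1, 2 * i)}. ancestor c w}"
  define Z where "Z = {z \<in> G - fork h i. ancestor (?sw z) w}"
  have hi: "(h, i) \<in> G" "(h, i) \<in> dtree" and "1 \<le> i"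
    using assms(1,3) by (auto simp: admissible_def dtree_def)
  have "card ?A \<le> n"
    using assms(4) swap_node_in_dtree [OF hi(2) w] by (simp add: ancestors_bounded_def)
  have "card {z \<in> Phi h i G. ancestor z w} \<le> card (C \<union> ?sw ` Z)"
    using assms(2) by (intro card_mono) (auto simp: Phi_eq_image C_def Z_def)
  also have "\<dots> \<le> card C + card (?sw ` Z)"
    by (rule card_Un_le)
  also have "\<dots> \<le> card C + card Z"
    using assms(2) by (simp add: Z_def card_image_le)
  finally have split: "card {z \<in> Phi h i G. ancestor z w} \<le> card C + card Z" .
  have Z: "Z \<subseteq> ?A - {(h, i)}"
    using assms(1) ancestor_of_swap_node [OF hi(2) _ w] by (auto simp: Z_def fork_def)
  show "card {z \<in> Phi h i G. ancestor z w} \<le> n"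
  proof (cases "C = {}")
    case True
    have "card Z \<le> card ?A"
      using Z assms(2) by (intro card_mono) auto
    with split True \<open>card ?A \<le> n\<close> show ?thesis
      by simp
  next
    case False
    have "\<not> (ancestor (h + 1, 2 * i - 1) w \<and> ancestor (h + 1, 2 * i) w)"
      using ancestor_same_level_eq [of "h + 1" "2 * i - 1" w "2 * i"] \<open>1 \<le> i\<close> by fastforce
    then have "card C \<le> 1"
      by (auto simp: C_def card_le_Suc0_iff_eq)
    from False obtain c where "c \<in> {(h + 1, 2 * i - 1), (h + 1, 2 * i)}" and "ancestor c w"
      by (auto simp: C_def)
    then have "ancestor (h, i) w"
      using ancestor_children [OF \<open>1 \<le> i\<close>] ancestor_trans by blast
    then have "(h, i) \<in> ?A"
      using ancestor_of_swap_node [OF hi(2) hi(2) w] swap_node_fixed [of i "(h, i)" h] hi \<open>1 \<le> i\<close>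
      by simp
    then have "card Z < card ?A"
      using Z assms(2) by (intro psubset_card_mono) auto
    with split \<open>card C \<le> 1\<close> \<open>card ?A \<le> n\<close> show ?thesis
      by linarith
  qed
qed

lemma exists_admissible_below:
  assumes "G \<subseteq> dtree" and "finite G" and "ancestors_bounded n G" and "x \<in> G"
  shows "\<exists>h i. admissible G h i \<and> h < fst x + n"
proof -
  \<comment> \<open>\<open>y \<in> D\<close> means that every level from \<open>x\<close> down to \<open>y\<close> carries a node of \<open>G\<close> on the
    path between them. A deepest such \<open>y\<close> is admissible and, its path consisting of ancestors
    of \<open>y\<close>, lies fewer than \<open>n\<close> levels below \<open>x\<close>.\<close>
  define path where "path y = {z \<in> G. ancestor x z \<and> ancestor z y}" for y
  define D where "D = {y \<in> G. ancestor x y \<and> fst y - fst x < card (path y)}"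
  have "x \<in> path x" and "finite (path x)"
    using assms(2,4) by (simp_all add: path_def ancestor_refl)
  then have "x \<in> D"
    using assms(4) by (auto simp: D_def ancestor_refl card_gt_0_iff)
  moreover have "finite D"
    using assms(2) by (simp add: D_def)
  ultimately have "Max (fst ` D) \<in> fst ` D"
    by (intro Max_in) auto
  then obtain y where "y \<in> D" and y_max: "fst y = Max (fst ` D)"
    by (metis imageE)
  have deepest: "fst y' \<le> fst y" if "y' \<in> D" for y'
    using that \<open>finite D\<close> by (simp add: y_max)
  obtain h i where y: "y = (h, i)"
    by fastforce
  have "y \<in> G" and "ancestor x y" and short: "fst y - fst x < card (path y)"
    using \<open>y \<in> D\<close> by (auto simp: D_def)
  then have "y \<in> dtree" and "1 \<le> i"
    using assms(1) by (auto simp: y dtree_def)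
  have "card (path y) \<le> card {z \<in> G. ancestor z y}"
    using assms(2) by (intro card_mono) (auto simp: path_def)
  also have "\<dots> \<le> n"
    using assms(3) \<open>y \<in> dtree\<close> by (simp add: ancestors_bounded_def)
  finally have "h < fst x + n"
    using short ancestor_level_le [OF \<open>ancestor x y\<close>] by (simp add: y)
  moreover have "c \<notin> G" if "c \<in> {(h + 1, 2 * i - 1), (h + 1, 2 * i)}" for c
  proof
    assume "c \<in> G"
    have "ancestor y c"
      using that ancestor_children [OF \<open>1 \<le> i\<close>] by (auto simp: y)
    with \<open>ancestor x y\<close> have "ancestor x c"
      by (rule ancestor_trans)
    have finite_path: "finite (path z)" for z
      using assms(2) by (simp add: path_def)
    have "c \<notin> path y"
      using that ancestor_level_le by (fastforce simp: path_def y)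
    then have "Suc (card (path y)) = card (insert c (path y))"
      by (simp add: finite_path)
    also have "\<dots> \<le> card (path c)"
    proof (rule card_mono [OF finite_path])
      show "insert c (path y) \<subseteq> path c"
        unfolding path_def using \<open>c \<in> G\<close> \<open>ancestor x c\<close> \<open>ancestor y c\<close>
        by (blast intro: ancestor_trans ancestor_refl)
    qed
    finally have "fst c - fst x < card (path c)"
      using short that ancestor_level_le [OF \<open>ancestor x y\<close>] by (auto simp: y)
    with \<open>c \<in> G\<close> \<open>ancestor x c\<close> have "c \<in> D"
      by (simp add: D_def)
    with deepest that show False
      by (fastforce simp: y)
  qed
  ultimately show ?thesis
    using \<open>y \<in> G\<close> by (auto simp: admissible_def y)
qed

definition Phi_step :: "(nat \<times> nat) set \<Rightarrow> (nat \<times> nat) set \<Rightarrow> bool" where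
  "Phi_step G G' \<longleftrightarrow> (\<exists>h i. admissible G h i \<and> G' = Phi h i G)"

lemma Phi_steps_into_levels:
  assumes "G \<subseteq> dtree" and "finite G" and "ancestors_bounded n G" and "\<forall>z \<in> G. fst z \<le> M"
  shows "\<exists>G'. Phi_step\<^sup>*\<^sup>* G G' \<and> G' \<subseteq> dtree_lv (M + 1 - n) M"
  using assms
proof (induction "potential M G" arbitrary: G rule: less_induct)
  case less
  show ?case
  proof (cases "\<forall>z \<in> G. M < fst z + n")
    case True
    with less.prems have "G \<subseteq> dtree_lv (M + 1 - n) M"
      by (fastforce simp: dtree_def dtree_lv_def)
    then show ?thesis
      by blast
  next
    case False
    then obtain x where "x \<in> G" and "fst x + n \<le> M"
      by (auto simp: not_less)
    obtain h i where adm: "admissible G h i" and "h < fst x + n"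
      using exists_admissible_below [OF less.prems(1-3) \<open>x \<in> G\<close>] by blast
    with \<open>fst x + n \<le> M\<close> have "h < M"
      by simp
    from adm have "(h, i) \<in> dtree"
      using less.prems(1) by (auto simp: admissible_def)
    let ?G = "Phi h i G"
    have "?G \<subseteq> dtree" and "finite ?G" and "ancestors_bounded n ?G" and "\<forall>z \<in> ?G. fst z \<le> M"
      using less.prems adm \<open>h < M\<close> Phi_subset_dtree [OF \<open>(h, i) \<in> dtree\<close>] ancestors_bounded_Phi
      by (auto simp: Phi_eq_image)
    moreover have "potential M ?G < potential M G"
      using potential_Phi_less less.prems(2) adm \<open>h < M\<close> .
    ultimately obtain G' where "Phi_step\<^sup>*\<^sup>* ?G G'" and "G' \<subseteq> dtree_lv (M + 1 - n) M"
      using less.hyps by blast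
    moreover have "Phi_step G ?G"
      using adm by (auto simp: Phi_step_def)
    ultimately show ?thesis
      by (meson converse_rtranclp_into_rtranclp)
  qed
qed

lemma rtranclp_imp_chain:
  assumes "R\<^sup>*\<^sup>* x y"
  shows "\<exists>(N::nat) f. f 0 = x \<and> (\<forall>l \<in> {1..N}. R (f (l - 1)) (f l)) \<and> f N = y"
proof -
  obtain N f where "f 0 = x" and "f N = y" and steps: "\<forall>l < N. R (f l) (f (Suc l))"
    using rtranclp_imp_relpowp [OF assms] relpowp_fun_conv by metis
  moreover have "\<forall>l \<in> {1..N}. R (f (l - 1)) (f l)"
  proof
    fix l
    assume "l \<in> {1..N}"
    then have "l - 1 < N" and "Suc (l - 1) = l"
      by auto
    with steps show "R (f (l - 1)) (f l)"
      by metis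
  qed
  ultimately show ?thesis
    by blast
qed

lemma Phi_steps_into_window:
  assumes "F \<subseteq> dtree" and "finite F"
  shows "\<exists>m G. Phi_step\<^sup>*\<^sup>* F G \<and> G \<subseteq> dtree_lv (m + 1) (m + lh F)"
proof -
  have "\<forall>z \<in> F. fst z \<le> Max (insert 0 (fst ` F))"
    using assms(2) by simp
  then obtain M where "\<forall>z \<in> F. fst z \<le> M"
    by blast
  moreover have "ancestors_bounded (lh F) F"
    using assms by (rule ancestors_bounded_lh)
  ultimately obtain G where "Phi_step\<^sup>*\<^sup>* F G" and "G \<subseteq> dtree_lv (M + 1 - lh F) M"
    using Phi_steps_into_levels assms by blast
  moreover have "dtree_lv (M + 1 - lh F) M \<subseteq> dtree_lv (M - lh F + 1) (M - lh F + lh F)"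
    by (auto simp: dtree_lv_def)
  ultimately show ?thesis
    by blast
qed

theorem lemma3p8:
  fixes F :: "(nat \<times> nat) set"
  assumes "F \<subseteq> dtree" and "finite F"
  shows "\<exists>(m::nat) (N::nat) (Fs :: nat \<Rightarrow> (nat \<times> nat) set).
           Fs 0 = F \<and>
           (\<forall>l\<in>{1..N}. \<exists>h i. admissible (Fs (l - 1)) h i \<and> Fs l = Phi h i (Fs (l - 1))) \<and>
           Fs N \<subseteq> dtree_lv (m + 1) (m + lh F)"
proof -
  obtain m G where "Phi_step\<^sup>*\<^sup>* F G" and "G \<subseteq> dtree_lv (m + 1) (m + lh F)"
    using Phi_steps_into_window [OF assms] by blast
  moreover obtain N :: nat and f
    where "f 0 = F" and "\<forall>l \<in> {1..N}. Phi_step (f (l - 1)) (f l)" and "f N = G"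
    using rtranclp_imp_chain [OF \<open>Phi_step\<^sup>*\<^sup>* F G\<close>] by blast
  ultimately show ?thesis
    by (intro exI [of _ m] exI [of _ N] exI [of _ f]) (simp add: Phi_step_def)
qed

end
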